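(* Fix $\beta>0$ and a transient MDP with a sink state as in the context. There exists $\pi^\star\in\Pi_{\mathrm{SD}}$ such that $\bm v^{\infty,\star}=\bm v^{\infty}(\pi^\star)$ and \[ g^\star_\infty(\beta)=\mathrm{ERM}^{\bm\mu}_\beta\big[v^{\infty,\star}_{\tilde s_0}\big]=\max_{\pi\in\Pi_{\mathrm{SD}}}\mathrm{ERM}^{\bm\mu}_\beta\big[v^{\infty}_{\tilde s_0}(\pi)\big], \] where $\tilde s_0\sim\mu$ (quantities may take the value $-\infty$).
   Context: MDP: states $\bar{\mathcal S}=\{1,\dots,S,S+1\}$, $e:=S+1$ a sink state, $\mathcal S=\{1,\dots,S\}$; finite actions $\mathcal A$; transitions $p(s,a,s')$, real rewards $r(s,a,s')$ of arbitrary sign; $p(e,a,e)=1$, $r(e,a,e)=0$; initial distribution $\mu$ on $\mathcal S$ (never starting at $e$) with $\mu>0$ componentwise. Policy classes: $\Pi_{\mathrm{HR}}$ (history-dependent randomized), $\Pi_{\mathrm{MD}}$ (Markov deterministic), $\Pi_{\mathrm{SD}}$ (stationary deterministic). Transience (standing assumption): for every $\pi\in\Pi_{\mathrm{SD}}$, $\sum_{t\ge0}\mathbb P^{\pi,s}[\tilde s_t=s']<\infty$ for all $s,s'\in\mathcal S$. $\mathrm{ERM}_\beta[\tilde x]=-\beta^{-1}\log\mathbb E[e^{-\beta\tilde x}]$. Define $v^t_s(\pi)=\mathrm{ERM}^{\pi,s}_\beta[\sum_{k=0}^{t-1}r(\tilde s_k,\tilde a_k,\tilde s_{k+1})]$,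 $v^{t,\star}_s=\max_{\pi\in\Pi_{\mathrm{MD}}}v^t_s(\pi)$, $\bm v^\infty(\pi)=\liminf_t\bm v^t(\pi)$, $\bm v^{\infty,\star}=\liminf_t\bm v^{t,\star}$. Define $g_t(\pi,\beta)=\mathrm{ERM}^{\pi,\mu}_\beta[\sum_{k=0}^{t}r(\tilde s_k,\tilde a_k,\tilde s_{k+1})]$ (initial state drawn from $\mu$), $g^\star_t(\beta)=\sup_{\pi\in\Pi_{\mathrm{HR}}}g_t(\pi,\beta)$, $g^\star_\infty(\beta)=\liminf_{t\to\infty}g^\star_t(\beta)$. For a vector $\bm v$, $\mathrm{ERM}^{\mu}_\beta[v_{\tilde s_0}]=-\beta^{-1}\log\sum_s\mu_s e^{-\beta v_s}$. *)

theory Defs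
  imports "HOL-Library.Extended_Real" "HOL-Library.Liminf_Limsup"
begin

(* States are 1..S+1; the sink state is e = S+1.  Actions form a finite type 'a.
   p s a s' : transition probability, r s a s' : reward, mu : initial distribution. *)

definition erm :: "real \<Rightarrow> 'w set \<Rightarrow> ('w \<Rightarrow> real) \<Rightarrow> ('w \<Rightarrow> real) \<Rightarrow> real" where
  "erm \<beta> \<Omega> P X = - (1 / \<beta>) * ln (\<Sum>\<omega>\<in>\<Omega>. P \<omega> * exp (- \<beta> * X \<omega>))"

(* History-dependent randomized policy: given the past state-action pairs
   (s_0,a_0),...,(s_{k-1},a_{k-1}) and current state s_k, a distribution over actions. *)
type_synonym 'a hr_policy = "(nat \<times> 'a) list \<Rightarrow> nat \<Rightarrow> 'a \<Rightarrow> real"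

definition valid_hr :: "'a::finite hr_policy \<Rightarrow> bool" where
  "valid_hr \<pi> \<longleftrightarrow> (\<forall>h s. (\<forall>a. 0 \<le> \<pi> h s a) \<and> (\<Sum>a\<in>UNIV. \<pi> h s a) = 1)"

(* Markov deterministic policy: time \<Rightarrow> state \<Rightarrow> action *)
definition hr_of_md :: "(nat \<Rightarrow> nat \<Rightarrow> 'a) \<Rightarrow> 'a hr_policy" where
  "hr_of_md \<pi> = (\<lambda>h s a. if a = \<pi> (length h) s then 1 else 0)"

(* Stationary deterministic policy: state \<Rightarrow> action *)
definition hr_of_sd :: "(nat \<Rightarrow> 'a) \<Rightarrow> 'a hr_policy" where
  "hr_of_sd \<pi> = (\<lambda>h s a. if a = \<pi> s then 1 else 0)"

definition paths :: "nat \<Rightarrow> nat \<Rightarrow> nat \<Rightarrow> nat list set" where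
  "paths S s0 n = {ss. length ss = Suc n \<and> ss ! 0 = s0 \<and> set ss \<subseteq> {1..Suc S}}"

definition paths_init :: "nat \<Rightarrow> nat \<Rightarrow> nat list set" where
  "paths_init S n = {ss. length ss = Suc n \<and> ss ! 0 \<in> {1..S} \<and> set ss \<subseteq> {1..Suc S}}"

definition acts :: "nat \<Rightarrow> 'a list set" where
  "acts n = {as. length as = n}"

(* probability of (s_1,a_0,...,a_{n-1},s_n) given s_0, under policy \<pi> *)
definition path_prob :: "(nat \<Rightarrow> 'a \<Rightarrow> nat \<Rightarrow> real) \<Rightarrow> 'a hr_policy \<Rightarrow> nat list \<Rightarrow> 'a list \<Rightarrow> real" where
  "path_prob p \<pi> ss as =
     (\<Prod>k<length as. \<pi> (zip (take k ss) (take k as)) (ss ! k) (as ! k) * p (ss ! k) (as ! k) (ss ! Suc k))"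

definition path_ret :: "(nat \<Rightarrow> 'a \<Rightarrow> nat \<Rightarrow> real) \<Rightarrow> nat list \<Rightarrow> 'a list \<Rightarrow> real" where
  "path_ret r ss as = (\<Sum>k<length as. r (ss ! k) (as ! k) (ss ! Suc k))"

definition v_fin :: "nat \<Rightarrow> (nat \<Rightarrow> 'a::finite \<Rightarrow> nat \<Rightarrow> real) \<Rightarrow> (nat \<Rightarrow> 'a \<Rightarrow> nat \<Rightarrow> real) \<Rightarrow> real
                      \<Rightarrow> 'a hr_policy \<Rightarrow> nat \<Rightarrow> nat \<Rightarrow> real" where
  "v_fin S p r \<beta> \<pi> t s = erm \<beta> (paths S s t \<times> acts t)
      (\<lambda>(ss, as). path_prob p \<pi> ss as) (\<lambda>(ss, as). path_ret r ss as)"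

(* g_t(\<pi>,\<beta>) = ERM^{\<pi>,\<mu>}_\<beta>[ sum_{k=0}^{t} r(s_k,a_k,s_{k+1}) ] *)
definition g_fin :: "nat \<Rightarrow> (nat \<Rightarrow> 'a::finite \<Rightarrow> nat \<Rightarrow> real) \<Rightarrow> (nat \<Rightarrow> 'a \<Rightarrow> nat \<Rightarrow> real) \<Rightarrow> (nat \<Rightarrow> real)
                      \<Rightarrow> real \<Rightarrow> 'a hr_policy \<Rightarrow> nat \<Rightarrow> real" where
  "g_fin S p r \<mu> \<beta> \<pi> t = erm \<beta> (paths_init S (Suc t) \<times> acts (Suc t))
      (\<lambda>(ss, as). \<mu> (ss ! 0) * path_prob p \<pi> ss as) (\<lambda>(ss, as). path_ret r ss as)"

definition v_star :: "nat \<Rightarrow> (nat \<Rightarrow> 'a::finite \<Rightarrow> nat \<Rightarrow> real) \<Rightarrow> (nat \<Rightarrow> 'a \<Rightarrow> nat \<Rightarrow> real) \<Rightarrow> real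
                      \<Rightarrow> nat \<Rightarrow> nat \<Rightarrow> ereal" where
  "v_star S p r \<beta> t s = (SUP \<pi>::nat \<Rightarrow> nat \<Rightarrow> 'a. ereal (v_fin S p r \<beta> (hr_of_md \<pi>) t s))"

definition v_inf :: "nat \<Rightarrow> (nat \<Rightarrow> 'a::finite \<Rightarrow> nat \<Rightarrow> real) \<Rightarrow> (nat \<Rightarrow> 'a \<Rightarrow> nat \<Rightarrow> real) \<Rightarrow> real
                      \<Rightarrow> 'a hr_policy \<Rightarrow> nat \<Rightarrow> ereal" where
  "v_inf S p r \<beta> \<pi> s = liminf (\<lambda>t. ereal (v_fin S p r \<beta> \<pi> t s))"

definition v_inf_star :: "nat \<Rightarrow> (nat \<Rightarrow> 'a::finite \<Rightarrow> nat \<Rightarrow> real) \<Rightarrow> (nat \<Rightarrow> 'a \<Rightarrow> nat \<Rightarrow> real) \<Rightarrow> real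
                      \<Rightarrow> nat \<Rightarrow> ereal" where
  "v_inf_star S p r \<beta> s = liminf (\<lambda>t. v_star S p r \<beta> t s)"

definition g_star :: "nat \<Rightarrow> (nat \<Rightarrow> 'a::finite \<Rightarrow> nat \<Rightarrow> real) \<Rightarrow> (nat \<Rightarrow> 'a \<Rightarrow> nat \<Rightarrow> real) \<Rightarrow> (nat \<Rightarrow> real)
                      \<Rightarrow> real \<Rightarrow> nat \<Rightarrow> ereal" where
  "g_star S p r \<mu> \<beta> t = (SUP \<pi>\<in>{\<pi>::'a hr_policy. valid_hr \<pi>}. ereal (g_fin S p r \<mu> \<beta> \<pi> t))"

definition g_inf_star :: "nat \<Rightarrow> (nat \<Rightarrow> 'a::finite \<Rightarrow> nat \<Rightarrow> real) \<Rightarrow> (nat \<Rightarrow> 'a \<Rightarrow> nat \<Rightarrow> real) \<Rightarrow> (nat \<Rightarrow> real)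
                      \<Rightarrow> real \<Rightarrow> ereal" where
  "g_inf_star S p r \<mu> \<beta> = liminf (\<lambda>t. g_star S p r \<mu> \<beta> t)"

(* ERM^\<mu>_\<beta>[v_{s_0}] = -1/\<beta> log sum_s \<mu>_s exp(-\<beta> v_s), extended to ereal-valued v
   (e^{-\<beta>(-\<infinity>)} = \<infinity>, e^{-\<beta>\<infinity>} = 0, log 0 = -\<infinity>). *)
definition erm_mu :: "nat \<Rightarrow> (nat \<Rightarrow> real) \<Rightarrow> real \<Rightarrow> (nat \<Rightarrow> ereal) \<Rightarrow> ereal" where
  "erm_mu S \<mu> \<beta> v =
     (if \<exists>s\<in>{1..S}. 0 < \<mu> s \<and> v s = -\<infinity> then -\<infinity>
      else (let Z = (\<Sum>s\<in>{s\<in>{1..S}. v s \<noteq> \<infinity>}. \<mu> s * exp (- \<beta> * real_of_ereal (v s)))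
            in if Z = 0 then \<infinity> else ereal (- (1 / \<beta>) * ln Z)))"

definition occ :: "nat \<Rightarrow> (nat \<Rightarrow> 'a::finite \<Rightarrow> nat \<Rightarrow> real) \<Rightarrow> 'a hr_policy \<Rightarrow> nat \<Rightarrow> nat \<Rightarrow> nat \<Rightarrow> real" where
  "occ S p \<pi> s s' t = (\<Sum>(ss, as)\<in>paths S s t \<times> acts t. if ss ! t = s' then path_prob p \<pi> ss as else 0)"

(* transience: every stationary deterministic policy visits non-sink states finitely often in expectation *)
definition transient :: "nat \<Rightarrow> (nat \<Rightarrow> 'a::finite \<Rightarrow> nat \<Rightarrow> real) \<Rightarrow> bool" where
  "transient S p \<longleftrightarrow> (\<forall>\<pi>::nat \<Rightarrow> 'a. \<forall>s\<in>{1..S}. \<forall>s'\<in>{1..S}.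
       summable (\<lambda>t. occ S p (hr_of_sd \<pi>) s s' t))"

definition mdp :: "nat \<Rightarrow> (nat \<Rightarrow> 'a::finite \<Rightarrow> nat \<Rightarrow> real) \<Rightarrow> (nat \<Rightarrow> 'a \<Rightarrow> nat \<Rightarrow> real) \<Rightarrow> (nat \<Rightarrow> real) \<Rightarrow> bool" where
  "mdp S p r \<mu> \<longleftrightarrow>
     (\<forall>s\<in>{1..Suc S}. \<forall>a. (\<forall>s'\<in>{1..Suc S}. 0 \<le> p s a s') \<and> (\<Sum>s'\<in>{1..Suc S}. p s a s') = 1)
   \<and> (\<forall>a. p (Suc S) a (Suc S) = 1 \<and> r (Suc S) a (Suc S) = 0)
   \<and> (\<forall>s\<in>{1..S}. 0 < \<mu> s) \<and> (\<Sum>s\<in>{1..S}. \<mu> s) = 1"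

end

(*
  With the weights w(s,a,s') = p(s,a,s') exp(-beta r(s,a,s')), the exponential moment
  E[exp(-beta * return)] of a policy satisfies a linear recursion, and an ERM value is
  -(1/beta) ln of such a moment.  The optimal finite-horizon moments are therefore the iterates
  B^t 1 of the Bellman minimum operator B; they are attained by Markov deterministic policies,
  both from each state and for the initial distribution mu.

  The horizon limit is governed by u_t = B^t 1_sink, the optimal moment of the event "absorbed
  by time t": u_t increases and u_t <= B^t 1, so the optimal value tends to -infinity wherever
  u_t is unbounded.  On the states where u_t stays bounded, an action that is greedy for
  infinitely many u_t gives a stationary policy pi* that never leaves these states and for
  which lim u_t is a supersolution.  Transience yields n and delta > 0 such that pi* is absorbed
  within n steps with moment at least delta from every state, which makes the moment of the
  paths not yet absorbed vanish.  So the moments of pi* and the optimal moments have the same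
  limit, and the state values and the mu-mixture of them agree in the limit.
*)

theory Submission
  imports Defs
begin

section \<open>Path sums and exponential moments\<close>

(* Keeps the state space {1..Suc S} in one piece instead of splitting off the sink. *)
declare sum.cl_ivl_Suc [simp del] prod.cl_ivl_Suc [simp del]

lemma finite_paths: "finite (paths S s n)"
proof -
  have "paths S s n \<subseteq> {ss. set ss \<subseteq> {1..Suc S} \<and> length ss = Suc n}"
    by (auto simp: paths_def)
  then show ?thesis
    by (rule finite_subset) (simp add: finite_lists_length_eq)
qed

lemma finite_acts: "finite (acts n :: 'a::finite list set)"
  using finite_lists_length_eq[of "UNIV :: 'a set" n] by (simp add: acts_def)

lemma paths_0: "s \<in> {1..Suc S} \<Longrightarrow> paths S s 0 = {[s]}"
  by (auto simp: paths_def length_Suc_conv)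

lemma acts_0: "acts 0 = {[]}"
  by (auto simp: acts_def)

definition policy_shift :: "'a hr_policy \<Rightarrow> nat \<Rightarrow> 'a \<Rightarrow> 'a hr_policy" where
  "policy_shift \<pi> s a = (\<lambda>h. \<pi> ((s, a) # h))"

lemma policy_shift_hr_of_md [simp]: "policy_shift (hr_of_md \<pi>) s a = hr_of_md (\<lambda>k. \<pi> (Suc k))"
  by (auto simp: policy_shift_def hr_of_md_def)

lemma valid_hr_policy_shift: "valid_hr \<pi> \<Longrightarrow> valid_hr (policy_shift \<pi> s a)"
  by (auto simp: valid_hr_def policy_shift_def)

lemma valid_hr_of_md: "valid_hr (hr_of_md \<pi>)"
  by (auto simp: valid_hr_def hr_of_md_def)

lemma hr_of_sd_eq_hr_of_md: "hr_of_sd \<pi> = hr_of_md (\<lambda>_. \<pi>)"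
  by (auto simp: hr_of_sd_def hr_of_md_def)

lemma valid_hr_of_sd: "valid_hr (hr_of_sd \<pi>)"
  unfolding hr_of_sd_eq_hr_of_md by (rule valid_hr_of_md)

lemma sum_hr_of_md: "(\<Sum>a\<in>(UNIV :: 'a::finite set). hr_of_md \<pi> h s a * g a) = (g (\<pi> (length h) s) :: real)"
  unfolding hr_of_md_def of_bool_def[symmetric] by simp

lemma path_prob_Cons:
  "path_prob p \<pi> (s # ss) (a # as) = \<pi> [] s a * p s a (ss ! 0) * path_prob p (policy_shift \<pi> s a) ss as"
  unfolding path_prob_def policy_shift_def by (simp add: prod.lessThan_Suc_shift del: prod.lessThan_Suc)

lemma path_ret_Cons: "path_ret r (s # ss) (a # as) = r s a (ss ! 0) + path_ret r ss as"
  unfolding path_ret_def by (simp add: sum.lessThan_Suc_shift del: sum.lessThan_Suc)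

lemma paths_acts_Suc:
  assumes "s \<in> {1..Suc S}"
  shows "paths S s (Suc t) \<times> (acts (Suc t) :: 'a list set) =
    (\<lambda>(a, s', ss, as). (s # ss, a # as)) ` (UNIV \<times> (SIGMA s':{1..Suc S}. paths S s' t \<times> acts t))"
proof (intro set_eqI iffI)
  fix x assume x: "x \<in> paths S s (Suc t) \<times> (acts (Suc t) :: 'a list set)"
  then obtain ss' as' a where x_eq: "x = (s # ss', a # as')"
    by (auto simp: paths_def acts_def length_Suc_conv)
  with x have "ss' \<in> paths S (ss' ! 0) t" "ss' ! 0 \<in> {1..Suc S}" "as' \<in> acts t"
    by (auto simp: paths_def acts_def length_Suc_conv)
  then show "x \<in> (\<lambda>(a, s', ss, as). (s # ss, a # as)) ` (UNIV \<times> (SIGMA s':{1..Suc S}. paths S s' t \<times> acts t))"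
    using x_eq by (auto intro!: image_eqI[where x = "(a, ss' ! 0, ss', as')"])
next
  fix x assume "x \<in> (\<lambda>(a, s', ss, as). (s # ss, a # as)) ` (UNIV \<times> (SIGMA s':{1..Suc S}. paths S s' t \<times> (acts t :: 'a list set)))"
  then show "x \<in> paths S s (Suc t) \<times> acts (Suc t)"
    using assms by (auto simp: paths_def acts_def)
qed

lemma sum_paths_acts_Suc:
  assumes "s \<in> {1..Suc S}"
  shows "(\<Sum>x\<in>paths S s (Suc t) \<times> (acts (Suc t) :: 'a::finite list set). f x) =
    (\<Sum>a\<in>UNIV. \<Sum>s'\<in>{1..Suc S}. \<Sum>(ss, as)\<in>paths S s' t \<times> acts t. f (s # ss, a # as))"
proof -
  let ?h = "\<lambda>(a::'a, s'::nat, ss::nat list, as::'a list). (s # ss, a # as)"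
  let ?D = "UNIV \<times> (SIGMA s':{1..Suc S}. paths S s' t \<times> (acts t :: 'a list set))"
  have "inj_on ?h ?D"
    by (auto simp: inj_on_def paths_def)
  then have "(\<Sum>x\<in>paths S s (Suc t) \<times> (acts (Suc t) :: 'a list set). f x) = (\<Sum>y\<in>?D. f (?h y))"
    unfolding paths_acts_Suc[OF assms] by (rule sum.reindex_cong) auto
  also have "\<dots> = (\<Sum>a\<in>UNIV. \<Sum>(s', ss, as)\<in>(SIGMA s':{1..Suc S}. paths S s' t \<times> acts t). f (s # ss, a # as))"
    by (simp add: sum.cartesian_product split_beta)
  also have "\<dots> = (\<Sum>a\<in>UNIV. \<Sum>s'\<in>{1..Suc S}. \<Sum>(ss, as)\<in>paths S s' t \<times> acts t. f (s # ss, a # as))"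
    by (simp add: sum.Sigma finite_paths finite_acts split_beta)
  finally show ?thesis .
qed

lemma sum_path_prob_Suc:
  assumes "s \<in> {1..Suc S}"
  shows "(\<Sum>(ss, as)\<in>paths S s (Suc t) \<times> (acts (Suc t) :: 'a::finite list set). path_prob p \<pi> ss as * F ss as) =
    (\<Sum>a\<in>UNIV. \<pi> [] s a * (\<Sum>s'\<in>{1..Suc S}. p s a s' *
       (\<Sum>(ss, as)\<in>paths S s' t \<times> acts t. path_prob p (policy_shift \<pi> s a) ss as * F (s # ss) (a # as))))"
proof -
  have "path_prob p \<pi> (s # ss) (a # as) * F (s # ss) (a # as) =
      \<pi> [] s a * (p s a s' * (path_prob p (policy_shift \<pi> s a) ss as * F (s # ss) (a # as)))"
    if "ss \<in> paths S s' t" for a s' ss as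
    using that by (simp add: path_prob_Cons paths_def)
  then show ?thesis
    unfolding sum_paths_acts_Suc[OF assms] sum_distrib_left
    by (intro sum.cong refl) (auto simp: sum_distrib_left)
qed

definition exp_moment :: "nat \<Rightarrow> (nat \<Rightarrow> 'a::finite \<Rightarrow> nat \<Rightarrow> real) \<Rightarrow> (nat \<Rightarrow> 'a \<Rightarrow> nat \<Rightarrow> real) \<Rightarrow> real
    \<Rightarrow> 'a hr_policy \<Rightarrow> nat \<Rightarrow> nat \<Rightarrow> real" where
  "exp_moment S p r \<beta> \<pi> t s =
     (\<Sum>(ss, as)\<in>paths S s t \<times> acts t. path_prob p \<pi> ss as * exp (- \<beta> * path_ret r ss as))"

lemma exp_moment_0: "s \<in> {1..Suc S} \<Longrightarrow> exp_moment S p r \<beta> \<pi> 0 s = 1"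
  by (simp add: exp_moment_def paths_0 acts_0 path_prob_def path_ret_def)

lemma exp_moment_Suc:
  assumes "s \<in> {1..Suc S}"
  shows "exp_moment S p r \<beta> \<pi> (Suc t) s = (\<Sum>a\<in>UNIV. \<pi> [] s a *
     (\<Sum>s'\<in>{1..Suc S}. p s a s' * exp (- \<beta> * r s a s') * exp_moment S p r \<beta> (policy_shift \<pi> s a) t s'))"
proof -
  have "(\<Sum>(ss, as)\<in>paths S s' t \<times> acts t. path_prob p \<pi>' ss as * exp (- \<beta> * path_ret r (s # ss) (a # as))) =
      exp (- \<beta> * r s a s') * exp_moment S p r \<beta> \<pi>' t s'" for \<pi>' a s'
    unfolding exp_moment_def sum_distrib_left
    by (intro sum.cong refl) (auto simp: path_ret_Cons paths_def algebra_simps simp flip: exp_add)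
  then show ?thesis
    unfolding exp_moment_def[of _ _ _ _ _ "Suc t"] sum_path_prob_Suc[OF assms]
    by (simp add: mult.assoc)
qed

lemma occ_0: "s \<in> {1..Suc S} \<Longrightarrow> occ S p \<pi> s s' 0 = (if s = s' then 1 else 0)"
  by (simp add: occ_def paths_0 acts_0 path_prob_def)

lemma occ_Suc:
  assumes "s \<in> {1..Suc S}"
  shows "occ S p \<pi> s s'' (Suc t) = (\<Sum>a\<in>UNIV. \<pi> [] s a *
     (\<Sum>s'\<in>{1..Suc S}. p s a s' * occ S p (policy_shift \<pi> s a) s' s'' t))"
proof -
  have occ_eq: "occ S p \<pi>' s' s'' n =
      (\<Sum>(ss, as)\<in>paths S s' n \<times> acts n. path_prob p \<pi>' ss as * of_bool (ss ! n = s''))" for \<pi>' s' n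
    unfolding occ_def by (intro sum.cong) auto
  show ?thesis
    unfolding occ_eq sum_path_prob_Suc[OF assms] by simp
qed

lemma occ_hr_of_sd_Suc:
  "s \<in> {1..Suc S} \<Longrightarrow> occ S p (hr_of_sd \<pi>) s s'' (Suc t) =
     (\<Sum>s'\<in>{1..Suc S}. p s (\<pi> s) s' * occ S p (hr_of_sd \<pi>) s' s'' t)"
  using sum_hr_of_md[of "\<lambda>_. \<pi>" "[]"] by (simp add: occ_Suc hr_of_sd_eq_hr_of_md)

lemma sum_paths_init_acts:
  fixes \<mu> :: "nat \<Rightarrow> real"
  shows "(\<Sum>(ss, as)\<in>paths_init S n \<times> (acts n :: 'a::finite list set). \<mu> (ss ! 0) * F ss as) =
   (\<Sum>s\<in>{1..S}. \<mu> s * (\<Sum>(ss, as)\<in>paths S s n \<times> acts n. F ss as))"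
proof -
  let ?D = "SIGMA s:{1..S}. paths S s n \<times> (acts n :: 'a list set)"
  have "paths_init S n \<times> (acts n :: 'a list set) = snd ` ?D"
    by (force simp: paths_init_def paths_def image_iff)
  moreover have "inj_on snd ?D"
    by (auto simp: inj_on_def paths_def)
  ultimately have "(\<Sum>(ss, as)\<in>paths_init S n \<times> (acts n :: 'a::finite list set). \<mu> (ss ! 0) * F ss as) =
      (\<Sum>(s, ss, as)\<in>?D. \<mu> s * F ss as)"
    by (intro sum.reindex_cong[where l = snd]) (auto simp: paths_def)
  also have "\<dots> = (\<Sum>s\<in>{1..S}. \<Sum>(ss, as)\<in>paths S s n \<times> acts n. \<mu> s * F ss as)"
    by (subst sum.Sigma) (auto simp: finite_paths finite_acts)
  also have "\<dots> = (\<Sum>s\<in>{1..S}. \<mu> s * (\<Sum>(ss, as)\<in>paths S s n \<times> acts n. F ss as))"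
    by (simp add: sum_distrib_left split_beta)
  finally show ?thesis .
qed

section \<open>Certainty equivalents and ERM values\<close>

definition cert_equiv :: "real \<Rightarrow> real \<Rightarrow> real" where
  "cert_equiv \<beta> x = - (1 / \<beta>) * ln x"

lemma v_fin_eq_cert_equiv: "v_fin S p r \<beta> \<pi> t s = cert_equiv \<beta> (exp_moment S p r \<beta> \<pi> t s)"
  by (simp add: v_fin_def erm_def exp_moment_def cert_equiv_def split_beta)

lemma g_fin_eq_cert_equiv:
  "g_fin S p r \<mu> \<beta> \<pi> t = cert_equiv \<beta> (\<Sum>s\<in>{1..S}. \<mu> s * exp_moment S p r \<beta> \<pi> (Suc t) s)"
  using sum_paths_init_acts[where F = "\<lambda>ss as. path_prob p \<pi> ss as * exp (- \<beta> * path_ret r ss as)"]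
  by (simp add: g_fin_def erm_def cert_equiv_def exp_moment_def split_beta mult.assoc)

lemma v_inf_hr_of_sd_le_v_inf_star: "v_inf S p r \<beta> (hr_of_sd \<pi>) s \<le> v_inf_star S p r \<beta> s"
  unfolding v_inf_def v_inf_star_def v_star_def hr_of_sd_eq_hr_of_md
  by (intro Liminf_mono always_eventually allI SUP_upper) simp

lemma cert_equiv_antimono: "0 < \<beta> \<Longrightarrow> 0 < x \<Longrightarrow> x \<le> y \<Longrightarrow> cert_equiv \<beta> y \<le> cert_equiv \<beta> x"
  by (simp add: cert_equiv_def divide_right_mono)

lemma exp_cert_equiv: "\<beta> \<noteq> 0 \<Longrightarrow> 0 < x \<Longrightarrow> exp (- \<beta> * cert_equiv \<beta> x) = x"
  by (simp add: cert_equiv_def)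

lemma SUP_cert_equiv_attained:
  assumes "0 < \<beta>" "0 < w" "\<And>x. x \<in> A \<Longrightarrow> w \<le> f x" "x\<^sub>0 \<in> A" "f x\<^sub>0 = w"
  shows "(SUP x\<in>A. ereal (cert_equiv \<beta> (f x))) = ereal (cert_equiv \<beta> w)"
proof (rule antisym)
  show "(SUP x\<in>A. ereal (cert_equiv \<beta> (f x))) \<le> ereal (cert_equiv \<beta> w)"
    using assms(1-3) by (intro SUP_least) (simp add: cert_equiv_antimono)
  show "ereal (cert_equiv \<beta> w) \<le> (SUP x\<in>A. ereal (cert_equiv \<beta> (f x)))"
    using assms(4,5) by (intro SUP_upper2) auto
qed

lemma tendsto_cert_equiv:
  assumes "(f \<longlongrightarrow> L) F" "0 < L"
  shows "((\<lambda>x. ereal (cert_equiv \<beta> (f x))) \<longlongrightarrow> ereal (cert_equiv \<beta> L)) F"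
  unfolding lim_ereal cert_equiv_def using assms by (intro tendsto_intros) auto

lemma tendsto_cert_equiv_at_top:
  assumes "0 < \<beta>" "filterlim f at_top F"
  shows "((\<lambda>x. ereal (cert_equiv \<beta> (f x))) \<longlongrightarrow> -\<infinity>) F"
  unfolding tendsto_MInfty
proof
  fix c :: real
  have "\<forall>\<^sub>F x in F. - \<beta> * c + 1 \<le> ln (f x)"
    using filterlim_compose[OF ln_at_top assms(2)] by (simp add: filterlim_at_top)
  then show "\<forall>\<^sub>F x in F. ereal (cert_equiv \<beta> (f x)) < ereal c"
    by eventually_elim (use assms(1) in \<open>auto simp: cert_equiv_def field_simps\<close>)
qed

lemma erm_mu_cong: "(\<And>s. s \<in> {1..S} \<Longrightarrow> v s = v' s) \<Longrightarrow> erm_mu S \<mu> \<beta> v = erm_mu S \<mu> \<beta> v'"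
proof -
  assume eq: "\<And>s. s \<in> {1..S} \<Longrightarrow> v s = v' s"
  then have "(\<exists>s\<in>{1..S}. 0 < \<mu> s \<and> v s = -\<infinity>) = (\<exists>s\<in>{1..S}. 0 < \<mu> s \<and> v' s = -\<infinity>)"
    and dom: "{s\<in>{1..S}. v s \<noteq> \<infinity>} = {s\<in>{1..S}. v' s \<noteq> \<infinity>}"
    by auto
  moreover have "(\<Sum>s\<in>{s\<in>{1..S}. v s \<noteq> \<infinity>}. \<mu> s * exp (- \<beta> * real_of_ereal (v s))) =
      (\<Sum>s\<in>{s\<in>{1..S}. v' s \<noteq> \<infinity>}. \<mu> s * exp (- \<beta> * real_of_ereal (v' s)))"
    unfolding dom using eq by (intro sum.cong) auto
  ultimately show ?thesis
    unfolding erm_mu_def by presburger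
qed

lemma erm_mu_MInfty: "s \<in> {1..S} \<Longrightarrow> 0 < \<mu> s \<Longrightarrow> v s = -\<infinity> \<Longrightarrow> erm_mu S \<mu> \<beta> v = -\<infinity>"
  unfolding erm_mu_def by auto

lemma erm_mu_ereal:
  assumes "\<And>s. s \<in> {1..S} \<Longrightarrow> v s = ereal (x s)" "0 < (\<Sum>s\<in>{1..S}. \<mu> s * exp (- \<beta> * x s))"
  shows "erm_mu S \<mu> \<beta> v = ereal (cert_equiv \<beta> (\<Sum>s\<in>{1..S}. \<mu> s * exp (- \<beta> * x s)))"
proof -
  have "{s\<in>{1..S}. v s \<noteq> \<infinity>} = {1..S}"
    using assms(1) by auto
  then show ?thesis
    using assms by (simp add: erm_mu_def cert_equiv_def)
qed

lemma erm_mu_mono: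
  assumes "0 < \<beta>" and \<mu>_pos: "\<And>s. s \<in> {1..S} \<Longrightarrow> 0 < \<mu> s"
    and le: "\<And>s. s \<in> {1..S} \<Longrightarrow> v s \<le> v' s"
  shows "erm_mu S \<mu> \<beta> v \<le> erm_mu S \<mu> \<beta> v'"
proof (cases "\<exists>s\<in>{1..S}. 0 < \<mu> s \<and> v s = -\<infinity>")
  case True
  then show ?thesis by (simp add: erm_mu_def)
next
  case False
  with \<mu>_pos have v_fin: "v s \<noteq> -\<infinity>" if "s \<in> {1..S}" for s
    using that by blast
  with le have v'_fin: "v' s \<noteq> -\<infinity>" if "s \<in> {1..S}" for s
    using that by (metis MInfty_eq_minfinity ereal_infty_less_eq(2))
  define Z where "Z w = (\<Sum>s\<in>{s\<in>{1..S}. w s \<noteq> \<infinity>}. \<mu> s * exp (- \<beta> * real_of_ereal (w s)))" for w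
  have dom: "{s\<in>{1..S}. v' s \<noteq> \<infinity>} \<subseteq> {s\<in>{1..S}. v s \<noteq> \<infinity>}"
    using le by (force simp: top_unique)
  have "Z v' \<le> (\<Sum>s\<in>{s\<in>{1..S}. v' s \<noteq> \<infinity>}. \<mu> s * exp (- \<beta> * real_of_ereal (v s)))"
    unfolding Z_def
  proof (intro sum_mono mult_left_mono)
    fix s assume s: "s \<in> {s\<in>{1..S}. v' s \<noteq> \<infinity>}"
    with dom v_fin v'_fin le[of s] have "real_of_ereal (v s) \<le> real_of_ereal (v' s)"
      by (cases "v s"; cases "v' s") auto
    with \<open>0 < \<beta>\<close> show "exp (- \<beta> * real_of_ereal (v' s)) \<le> exp (- \<beta> * real_of_ereal (v s))"
      by simp
    show "0 \<le> \<mu> s" using s \<mu>_pos by (simp add: less_imp_le)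
  qed
  also have "\<dots> \<le> Z v"
    unfolding Z_def using dom \<mu>_pos by (intro sum_mono2) (auto intro: less_imp_le)
  finally have Z_le: "Z v' \<le> Z v" .
  have erm_eq: "erm_mu S \<mu> \<beta> w = (if Z w = 0 then \<infinity> else ereal (cert_equiv \<beta> (Z w)))"
    if "\<And>s. s \<in> {1..S} \<Longrightarrow> w s \<noteq> -\<infinity>" for w
    using that unfolding erm_mu_def Z_def cert_equiv_def by auto
  have "0 \<le> Z v'"
    unfolding Z_def using \<mu>_pos by (intro sum_nonneg mult_nonneg_nonneg) (auto simp: less_imp_le)
  with Z_le show ?thesis
    using erm_eq[of v] erm_eq[of v'] v_fin v'_fin cert_equiv_antimono[OF \<open>0 < \<beta>\<close>] by auto
qed

lemma filterlim_at_top_incseq_unbounded: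
  fixes f :: "nat \<Rightarrow> real"
  assumes "incseq f" "\<not> bdd_above (range f)"
  shows "filterlim f at_top sequentially"
  unfolding filterlim_at_top eventually_sequentially
proof
  fix c
  obtain n where "c < f n"
    using assms(2) by (meson bdd_aboveI2 not_le)
  then show "\<exists>n. \<forall>t\<ge>n. c \<le> f t"
    using assms(1) by (meson incseq_def order.trans less_imp_le)
qed

section \<open>The Bellman operator of exponential moments\<close>

locale erm_mdp =
  fixes S :: nat and p r :: "nat \<Rightarrow> 'a::finite \<Rightarrow> nat \<Rightarrow> real" and \<mu> :: "nat \<Rightarrow> real" and \<beta> :: real
  assumes beta_pos: "0 < \<beta>" and mdp: "mdp S p r \<mu>"
begin

abbreviation states where "states \<equiv> {1..Suc S}"
abbreviation nonsink where "nonsink \<equiv> {1..S}"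
abbreviation sink where "sink \<equiv> Suc S"

lemma p_nonneg: "s \<in> states \<Longrightarrow> s' \<in> states \<Longrightarrow> 0 \<le> p s a s'"
  and sum_p: "s \<in> states \<Longrightarrow> (\<Sum>s'\<in>states. p s a s') = 1"
  and p_sink: "p sink a sink = 1"
  and r_sink: "r sink a sink = 0"
  and mu_pos: "s \<in> nonsink \<Longrightarrow> 0 < \<mu> s"
  and sum_mu: "(\<Sum>s\<in>nonsink. \<mu> s) = 1"
  using mdp by (auto simp: mdp_def)

lemma nonsink_nonempty: "1 \<in> nonsink"
  using sum_mu by (cases S) auto

lemma p_sink_other:
  assumes "s' \<in> states" "s' \<noteq> sink"
  shows "p sink a s' = 0"
proof -
  have "(\<Sum>s'\<in>states. p sink a s') = p sink a sink + (\<Sum>s'\<in>states - {sink}. p sink a s')"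
    by (rule sum.remove) auto
  then have "(\<Sum>s'\<in>states - {sink}. p sink a s') = 0"
    using sum_p[of sink a] p_sink by simp
  then show ?thesis
    using assms p_nonneg[of sink] by (subst (asm) sum_nonneg_eq_0_iff) auto
qed

definition weight :: "nat \<Rightarrow> 'a \<Rightarrow> nat \<Rightarrow> real" where
  "weight s a s' = p s a s' * exp (- \<beta> * r s a s')"

lemma weight_nonneg: "s \<in> states \<Longrightarrow> s' \<in> states \<Longrightarrow> 0 \<le> weight s a s'"
  by (simp add: weight_def p_nonneg)

lemma weight_pos_iff: "0 < weight s a s' \<longleftrightarrow> 0 < p s a s'"
  by (simp add: weight_def zero_less_mult_iff)

lemma sum_weight_sink: "(\<Sum>s'\<in>states. weight sink a s' * f s') = f sink"
proof -
  have "(\<Sum>s'\<in>states. weight sink a s' * f s') =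
      weight sink a sink * f sink + (\<Sum>s'\<in>states - {sink}. weight sink a s' * f s')"
    by (rule sum.remove) auto
  moreover have "(\<Sum>s'\<in>states - {sink}. weight sink a s' * f s') = 0"
    by (rule sum.neutral) (auto simp: weight_def p_sink_other)
  ultimately show ?thesis
    by (simp add: weight_def p_sink r_sink)
qed

lemma sum_weight_pos:
  assumes "s \<in> states" "\<And>s'. s' \<in> states \<Longrightarrow> 0 < f s'"
  shows "0 < (\<Sum>s'\<in>states. weight s a s' * f s')"
proof -
  obtain s' where s': "s' \<in> states" "0 < p s a s'"
  proof (rule ccontr)
    assume "\<not> thesis"
    with that have "(\<Sum>s'\<in>states. p s a s') \<le> 0"
      by (intro sum_nonpos) (meson not_le)
    with sum_p[OF assms(1)] show False by simp
  qed
  show ?thesis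
  proof (rule sum_pos2[OF _ s'(1)])
    show "0 < weight s a s' * f s'"
      using s' assms(2) weight_pos_iff by auto
    show "0 \<le> weight s a i * f i" if "i \<in> states" for i
      using that assms weight_nonneg[OF assms(1) that, of a] by (simp add: less_imp_le)
  qed simp
qed

lemma sum_weight_mono:
  "s \<in> states \<Longrightarrow> (\<And>s'. s' \<in> states \<Longrightarrow> f s' \<le> g s') \<Longrightarrow>
     (\<Sum>s'\<in>states. weight s a s' * f s') \<le> (\<Sum>s'\<in>states. weight s a s' * g s')"
  by (intro sum_mono mult_left_mono) (auto simp: weight_nonneg)

definition bellman :: "(nat \<Rightarrow> real) \<Rightarrow> nat \<Rightarrow> real" where
  "bellman f s = Min (range (\<lambda>a. \<Sum>s'\<in>states. weight s a s' * f s'))"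

definition greedy :: "(nat \<Rightarrow> real) \<Rightarrow> nat \<Rightarrow> 'a" where
  "greedy f s = (SOME a. bellman f s = (\<Sum>s'\<in>states. weight s a s' * f s'))"

lemma bellman_le: "bellman f s \<le> (\<Sum>s'\<in>states. weight s a s' * f s')"
  unfolding bellman_def by (rule Min_le) auto

lemma bellman_greedy: "bellman f s = (\<Sum>s'\<in>states. weight s (greedy f s) s' * f s')"
proof -
  have "bellman f s \<in> range (\<lambda>a. \<Sum>s'\<in>states. weight s a s' * f s')"
    unfolding bellman_def by (rule Min_in) auto
  then show ?thesis
    unfolding greedy_def by (auto intro: someI)
qed

lemma bellman_mono:
  assumes "s \<in> states" "\<And>s'. s' \<in> states \<Longrightarrow> f s' \<le> g s'"
  shows "bellman f s \<le> bellman g s"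
proof -
  have "bellman f s \<le> (\<Sum>s'\<in>states. weight s (greedy g s) s' * f s')"
    by (rule bellman_le)
  also have "\<dots> \<le> (\<Sum>s'\<in>states. weight s (greedy g s) s' * g s')"
    by (rule sum_weight_mono[OF assms])
  finally show ?thesis
    by (simp add: bellman_greedy[of g s])
qed

lemma bellman_sink: "bellman f sink = f sink"
  unfolding bellman_def sum_weight_sink by simp

lemma bellman_pos: "s \<in> states \<Longrightarrow> (\<And>s'. s' \<in> states \<Longrightarrow> 0 < f s') \<Longrightarrow> 0 < bellman f s"
  unfolding bellman_greedy by (rule sum_weight_pos)

lemma bellman_nonneg: "s \<in> states \<Longrightarrow> (\<And>s'. s' \<in> states \<Longrightarrow> 0 \<le> f s') \<Longrightarrow> 0 \<le> bellman f s"
  unfolding bellman_greedy by (intro sum_nonneg mult_nonneg_nonneg weight_nonneg)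

definition opt_moment :: "nat \<Rightarrow> nat \<Rightarrow> real" where
  "opt_moment t = (bellman ^^ t) (\<lambda>_. 1)"

lemma opt_moment_0: "opt_moment 0 s = 1"
  and opt_moment_Suc: "opt_moment (Suc t) = bellman (opt_moment t)"
  by (simp_all add: opt_moment_def)

lemma opt_moment_pos: "s \<in> states \<Longrightarrow> 0 < opt_moment t s"
  by (induction t arbitrary: s) (auto simp: opt_moment_0 opt_moment_Suc intro!: bellman_pos)

abbreviation moment where "moment \<equiv> exp_moment S p r \<beta>"

lemma moment_Suc:
  "s \<in> states \<Longrightarrow> moment \<pi> (Suc t) s =
     (\<Sum>a\<in>UNIV. \<pi> [] s a * (\<Sum>s'\<in>states. weight s a s' * moment (policy_shift \<pi> s a) t s'))"
  unfolding weight_def by (rule exp_moment_Suc)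

lemma moment_hr_of_md_Suc:
  "s \<in> states \<Longrightarrow> moment (hr_of_md \<pi>) (Suc t) s =
     (\<Sum>s'\<in>states. weight s (\<pi> 0 s) s' * moment (hr_of_md (\<lambda>k. \<pi> (Suc k))) t s')"
  using sum_hr_of_md[of \<pi> "[]"] by (simp add: moment_Suc)

lemma moment_hr_of_sd_Suc:
  "s \<in> states \<Longrightarrow> moment (hr_of_sd \<pi>) (Suc t) s =
     (\<Sum>s'\<in>states. weight s (\<pi> s) s' * moment (hr_of_sd \<pi>) t s')"
  unfolding hr_of_sd_eq_hr_of_md by (rule moment_hr_of_md_Suc)

lemma opt_moment_le_moment: "valid_hr \<pi> \<Longrightarrow> s \<in> states \<Longrightarrow> opt_moment t s \<le> moment \<pi> t s"
proof (induction t arbitrary: \<pi> s)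
  case 0
  then show ?case by (simp add: opt_moment_0 exp_moment_0)
next
  case (Suc t)
  have "opt_moment (Suc t) s = (\<Sum>a\<in>UNIV. \<pi> [] s a * opt_moment (Suc t) s)"
    using Suc.prems(1) by (simp add: valid_hr_def flip: sum_distrib_right)
  also have "\<dots> \<le> (\<Sum>a\<in>UNIV. \<pi> [] s a * (\<Sum>s'\<in>states. weight s a s' * moment (policy_shift \<pi> s a) t s'))"
  proof (intro sum_mono mult_left_mono)
    fix a
    show "0 \<le> \<pi> [] s a"
      using Suc.prems(1) by (simp add: valid_hr_def)
    have "opt_moment (Suc t) s \<le> (\<Sum>s'\<in>states. weight s a s' * opt_moment t s')"
      unfolding opt_moment_Suc by (rule bellman_le)
    also have "\<dots> \<le> (\<Sum>s'\<in>states. weight s a s' * moment (policy_shift \<pi> s a) t s')"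
      using Suc.prems by (intro sum_weight_mono Suc.IH valid_hr_policy_shift)
    finally show "opt_moment (Suc t) s \<le> \<dots>" .
  qed
  also have "\<dots> = moment \<pi> (Suc t) s"
    using moment_Suc[OF Suc.prems(2)] by simp
  finally show ?case .
qed

lemma exists_hr_of_md_moment_eq_opt: "\<exists>\<pi>. \<forall>s\<in>states. moment (hr_of_md \<pi>) t s = opt_moment t s"
proof (induction t)
  case 0
  show ?case by (simp add: exp_moment_0 opt_moment_0)
next
  case (Suc t)
  then obtain \<pi> where \<pi>: "\<forall>s\<in>states. moment (hr_of_md \<pi>) t s = opt_moment t s" ..
  have "moment (hr_of_md (case_nat (greedy (opt_moment t)) \<pi>)) (Suc t) s = opt_moment (Suc t) s"
    if "s \<in> states" for s
    using that \<pi> by (simp add: moment_hr_of_md_Suc opt_moment_Suc bellman_greedy)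
  then show ?case by blast
qed

lemma v_star_eq_opt_moment: "s \<in> states \<Longrightarrow> v_star S p r \<beta> t s = ereal (cert_equiv \<beta> (opt_moment t s))"
  using exists_hr_of_md_moment_eq_opt[of t]
  unfolding v_star_def v_fin_eq_cert_equiv
  by (elim exE, intro SUP_cert_equiv_attained beta_pos opt_moment_pos opt_moment_le_moment valid_hr_of_md) auto

lemma sum_mu_pos: "(\<And>s. s \<in> nonsink \<Longrightarrow> 0 < f s) \<Longrightarrow> 0 < (\<Sum>s\<in>nonsink. \<mu> s * f s)"
  using nonsink_nonempty mu_pos
  by (intro sum_pos2[of _ 1]) (auto intro!: mult_nonneg_nonneg less_imp_le)

lemma g_star_eq_opt_moment:
  "g_star S p r \<mu> \<beta> t = ereal (cert_equiv \<beta> (\<Sum>s\<in>nonsink. \<mu> s * opt_moment (Suc t) s))"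
proof -
  obtain \<pi> where \<pi>: "\<forall>s\<in>states. moment (hr_of_md \<pi>) (Suc t) s = opt_moment (Suc t) s"
    using exists_hr_of_md_moment_eq_opt by blast
  have "(\<Sum>s\<in>nonsink. \<mu> s * opt_moment (Suc t) s) \<le> (\<Sum>s\<in>nonsink. \<mu> s * moment \<pi>' (Suc t) s)"
    if "valid_hr \<pi>'" for \<pi>'
    using that by (intro sum_mono mult_left_mono opt_moment_le_moment less_imp_le mu_pos) auto
  then show ?thesis
    unfolding g_star_def g_fin_eq_cert_equiv using \<pi>
    by (intro SUP_cert_equiv_attained[where x\<^sub>0 = "hr_of_md \<pi>"] beta_pos sum_mu_pos opt_moment_pos)
      (auto simp: valid_hr_of_md)
qed

section \<open>Absorption moments and the stationary policy\<close>

definition policy_op :: "(nat \<Rightarrow> 'a) \<Rightarrow> (nat \<Rightarrow> real) \<Rightarrow> nat \<Rightarrow> real" where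
  "policy_op \<pi> f s = (\<Sum>s'\<in>states. weight s (\<pi> s) s' * f s')"

lemma policy_op_sink: "policy_op \<pi> f sink = f sink"
  by (simp only: policy_op_def sum_weight_sink)

lemma policy_op_pow_sink: "(policy_op \<pi> ^^ t) f sink = f sink"
  by (induction t) (simp_all add: policy_op_sink)

lemma policy_op_pow_linear:
  "(policy_op \<pi> ^^ t) (\<lambda>s. a * f s + b * g s) = (\<lambda>s. a * (policy_op \<pi> ^^ t) f s + b * (policy_op \<pi> ^^ t) g s)"
  by (induction t) (simp_all add: policy_op_def sum.distrib sum_distrib_left algebra_simps)

lemma policy_op_pow_nonneg:
  "(\<And>s. s \<in> states \<Longrightarrow> 0 \<le> f s) \<Longrightarrow> s \<in> states \<Longrightarrow> 0 \<le> (policy_op \<pi> ^^ t) f s"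
  by (induction t arbitrary: s) (auto simp: policy_op_def intro!: sum_nonneg mult_nonneg_nonneg weight_nonneg)

lemma moment_hr_of_sd: "s \<in> states \<Longrightarrow> moment (hr_of_sd \<pi>) t s = (policy_op \<pi> ^^ t) (\<lambda>_. 1) s"
  by (induction t arbitrary: s) (simp_all add: exp_moment_0 moment_hr_of_sd_Suc policy_op_def)

definition closed_under :: "(nat \<Rightarrow> 'a) \<Rightarrow> nat set \<Rightarrow> bool" where
  "closed_under \<pi> X \<longleftrightarrow> X \<subseteq> states \<and> (\<forall>s\<in>X. \<forall>s'\<in>states. 0 < p s (\<pi> s) s' \<longrightarrow> s' \<in> X)"

lemma policy_op_mono_on:
  assumes X: "closed_under \<pi> X" and le: "\<And>s. s \<in> X \<Longrightarrow> f s \<le> g s" and "s \<in> X"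
  shows "policy_op \<pi> f s \<le> policy_op \<pi> g s"
  unfolding policy_op_def
proof (rule sum_mono)
  fix s' assume s': "s' \<in> states"
  have "s \<in> states"
    using X \<open>s \<in> X\<close> by (auto simp: closed_under_def)
  then have "0 \<le> weight s (\<pi> s) s'"
    using s' by (rule weight_nonneg)
  moreover have "s' \<in> X" if "0 < weight s (\<pi> s) s'"
    using that X \<open>s \<in> X\<close> s' by (auto simp: closed_under_def weight_pos_iff)
  ultimately show "weight s (\<pi> s) s' * f s' \<le> weight s (\<pi> s) s' * g s'"
    using le by (cases "0 < weight s (\<pi> s) s'") (auto intro: mult_left_mono)
qed

lemma policy_op_pow_mono_on:
  assumes "closed_under \<pi> X" "\<And>s. s \<in> X \<Longrightarrow> f s \<le> g s" "s \<in> X"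
  shows "(policy_op \<pi> ^^ t) f s \<le> (policy_op \<pi> ^^ t) g s"
  using assms(3) by (induction t arbitrary: s) (auto intro: assms(2) policy_op_mono_on[OF assms(1)])

lemma closed_under_states: "closed_under \<pi> states"
  by (simp add: closed_under_def)

definition sink_ind :: "nat \<Rightarrow> real" where
  "sink_ind s = (if s = sink then 1 else 0)"

(* The optimal exponential moment of the paths that have reached the sink by time t. *)
definition exit_moment :: "nat \<Rightarrow> nat \<Rightarrow> real" where
  "exit_moment t = (bellman ^^ t) sink_ind"

lemma exit_moment_0: "exit_moment 0 = sink_ind"
  and exit_moment_Suc: "exit_moment (Suc t) = bellman (exit_moment t)"
  by (simp_all add: exit_moment_def)

lemma exit_moment_sink: "exit_moment t sink = 1"
  by (induction t) (simp_all add: exit_moment_0 exit_moment_Suc sink_ind_def bellman_sink)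

lemma exit_moment_nonneg: "s \<in> states \<Longrightarrow> 0 \<le> exit_moment t s"
  by (induction t arbitrary: s) (auto simp: exit_moment_0 exit_moment_Suc sink_ind_def intro: bellman_nonneg)

lemma exit_moment_le_Suc: "s \<in> states \<Longrightarrow> exit_moment t s \<le> exit_moment (Suc t) s"
proof (induction t arbitrary: s)
  case 0
  then show ?case
    using exit_moment_nonneg[of s 1] exit_moment_sink[of 1] by (cases "s = sink") (auto simp: exit_moment_0 sink_ind_def)
next
  case (Suc t)
  then show ?case
    unfolding exit_moment_Suc[of "Suc t"] exit_moment_Suc[of t] by (intro bellman_mono)
qed

lemma incseq_exit_moment: "s \<in> states \<Longrightarrow> incseq (\<lambda>t. exit_moment t s)"
  by (rule incseq_SucI) (rule exit_moment_le_Suc)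

lemma exit_moment_le_opt_moment: "s \<in> states \<Longrightarrow> exit_moment t s \<le> opt_moment t s"
  by (induction t arbitrary: s) (auto simp: exit_moment_0 opt_moment_0 sink_ind_def exit_moment_Suc opt_moment_Suc intro: bellman_mono)

definition bounded_states :: "nat set" where
  "bounded_states = {s\<in>states. bdd_above (range (\<lambda>t. exit_moment t s))}"

definition exit_limit :: "nat \<Rightarrow> real" where
  "exit_limit s = (SUP t. exit_moment t s)"

lemma bounded_states_subset: "bounded_states \<subseteq> states"
  by (auto simp: bounded_states_def)

lemma exit_moment_tendsto: "s \<in> bounded_states \<Longrightarrow> (\<lambda>t. exit_moment t s) \<longlonglongrightarrow> exit_limit s"
  unfolding exit_limit_def bounded_states_def by (intro LIMSEQ_incseq_SUP incseq_exit_moment) auto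

lemma exit_moment_le_limit: "s \<in> bounded_states \<Longrightarrow> exit_moment t s \<le> exit_limit s"
  unfolding exit_limit_def bounded_states_def by (auto intro: cSUP_upper)

lemma exit_moment_tendsto_at_top:
  "s \<in> states \<Longrightarrow> s \<notin> bounded_states \<Longrightarrow> filterlim (\<lambda>t. exit_moment t s) at_top sequentially"
  unfolding bounded_states_def by (intro filterlim_at_top_incseq_unbounded incseq_exit_moment) auto

definition pi_star :: "nat \<Rightarrow> 'a" where
  "pi_star s = (SOME a. infinite {t. greedy (exit_moment t) s = a})"

lemma pi_star_frequent: "infinite {t. greedy (exit_moment t) s = pi_star s}"
proof -
  have "\<exists>a\<in>range (\<lambda>t. greedy (exit_moment t) s). infinite ((\<lambda>t. greedy (exit_moment t) s) -` {a})"
    by (rule inf_img_fin_dom) auto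
  then have "\<exists>a. infinite {t. greedy (exit_moment t) s = a}"
    by (auto simp: vimage_def)
  then show ?thesis
    unfolding pi_star_def by (rule someI_ex)
qed

lemma sum_weight_pi_star_le_exit_limit:
  assumes "s \<in> bounded_states"
  shows "(\<Sum>s'\<in>states. weight s (pi_star s) s' * exit_moment t s') \<le> exit_limit s"
proof -
  obtain t' where "t \<le> t'" and greedy: "greedy (exit_moment t') s = pi_star s"
    using pi_star_frequent[of s] unfolding infinite_nat_iff_unbounded_le by blast
  have "s \<in> states"
    using assms bounded_states_subset by auto
  then have "(\<Sum>s'\<in>states. weight s (pi_star s) s' * exit_moment t s') \<le>
      (\<Sum>s'\<in>states. weight s (pi_star s) s' * exit_moment t' s')"
    using \<open>t \<le> t'\<close> incseq_exit_moment by (intro sum_weight_mono) (auto simp: incseq_def)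
  also have "\<dots> = exit_moment (Suc t') s"
    by (simp add: exit_moment_Suc bellman_greedy greedy)
  also have "\<dots> \<le> exit_limit s"
    using assms by (rule exit_moment_le_limit)
  finally show ?thesis .
qed

lemma closed_under_pi_star: "closed_under pi_star bounded_states"
  unfolding closed_under_def
proof (intro conjI ballI impI bounded_states_subset)
  fix s s' assume s: "s \<in> bounded_states" and s': "s' \<in> states" and "0 < p s (pi_star s) s'"
  then have pos: "0 < weight s (pi_star s) s'"
    by (simp add: weight_pos_iff)
  have "s \<in> states"
    using s bounded_states_subset by auto
  have "exit_moment t s' \<le> exit_limit s / weight s (pi_star s) s'" for t
  proof -
    have "weight s (pi_star s) s' * exit_moment t s' \<le> (\<Sum>s'\<in>states. weight s (pi_star s) s' * exit_moment t s')"
      using \<open>s \<in> states\<close> s' by (intro member_le_sum mult_nonneg_nonneg weight_nonneg exit_moment_nonneg) auto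
    also have "\<dots> \<le> exit_limit s"
      using s by (rule sum_weight_pi_star_le_exit_limit)
    finally show ?thesis
      using pos by (simp add: field_simps)
  qed
  then have "bdd_above (range (\<lambda>t. exit_moment t s'))"
    by (intro bdd_aboveI2)
  then show "s' \<in> bounded_states"
    using s' by (simp add: bounded_states_def)
qed

lemma weight_pi_star_outside:
  "s \<in> bounded_states \<Longrightarrow> s' \<in> states \<Longrightarrow> s' \<notin> bounded_states \<Longrightarrow> weight s (pi_star s) s' = 0"
proof -
  assume "s \<in> bounded_states" "s' \<in> states" "s' \<notin> bounded_states"
  then have "\<not> 0 < p s (pi_star s) s'" and "s \<in> states"
    using closed_under_pi_star by (auto simp: closed_under_def)
  then show ?thesis
    using p_nonneg[of s s' "pi_star s"] \<open>s' \<in> states\<close> by (simp add: weight_def)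
qed

lemma policy_op_pi_star_exit_limit_le:
  assumes s: "s \<in> bounded_states"
  shows "policy_op pi_star exit_limit s \<le> exit_limit s"
proof -
  have "(\<lambda>t. \<Sum>s'\<in>states. weight s (pi_star s) s' * exit_moment t s') \<longlonglongrightarrow> policy_op pi_star exit_limit s"
    unfolding policy_op_def
  proof (intro tendsto_sum)
    fix s' assume "s' \<in> states"
    then show "(\<lambda>t. weight s (pi_star s) s' * exit_moment t s') \<longlonglongrightarrow> weight s (pi_star s) s' * exit_limit s'"
      using s weight_pi_star_outside[of s s'] by (cases "s' \<in> bounded_states") (auto intro: tendsto_mult_left exit_moment_tendsto)
  qed
  then show ?thesis
    by (rule LIMSEQ_le_const2) (use sum_weight_pi_star_le_exit_limit[OF s] in auto)
qed

lemma policy_op_pow_le_supersolution: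
  assumes "closed_under \<pi> X" "\<And>s. s \<in> X \<Longrightarrow> policy_op \<pi> g s \<le> g s" "s \<in> X"
  shows "(policy_op \<pi> ^^ t) g s \<le> g s"
  using assms(3)
proof (induction t arbitrary: s)
  case (Suc t)
  have "(policy_op \<pi> ^^ Suc t) g s \<le> policy_op \<pi> g s"
    using Suc by (simp add: policy_op_mono_on[OF assms(1)])
  also have "\<dots> \<le> g s"
    using Suc.prems by (rule assms(2))
  finally show ?case .
qed simp

definition policy_exit_moment :: "(nat \<Rightarrow> 'a) \<Rightarrow> nat \<Rightarrow> nat \<Rightarrow> real" where
  "policy_exit_moment \<pi> t = (policy_op \<pi> ^^ t) sink_ind"

definition alive_moment :: "(nat \<Rightarrow> 'a) \<Rightarrow> nat \<Rightarrow> nat \<Rightarrow> real" where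
  "alive_moment \<pi> t = (policy_op \<pi> ^^ t) (\<lambda>s. 1 - sink_ind s)"

lemma moment_hr_of_sd_split:
  "s \<in> states \<Longrightarrow> moment (hr_of_sd \<pi>) t s = policy_exit_moment \<pi> t s + alive_moment \<pi> t s"
  using policy_op_pow_linear[where a = 1 and f = sink_ind and b = 1 and g = "\<lambda>s. 1 - sink_ind s"]
  by (simp add: moment_hr_of_sd policy_exit_moment_def alive_moment_def)

lemma policy_exit_moment_sink: "policy_exit_moment \<pi> t sink = 1"
  by (simp add: policy_exit_moment_def policy_op_pow_sink sink_ind_def)

lemma policy_exit_moment_nonneg: "s \<in> states \<Longrightarrow> 0 \<le> policy_exit_moment \<pi> t s"
  unfolding policy_exit_moment_def by (rule policy_op_pow_nonneg) (simp add: sink_ind_def)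

lemma alive_moment_nonneg: "s \<in> states \<Longrightarrow> 0 \<le> alive_moment \<pi> t s"
  unfolding alive_moment_def by (rule policy_op_pow_nonneg) (simp add: sink_ind_def)

lemma incseq_policy_exit_moment: "s \<in> states \<Longrightarrow> incseq (\<lambda>t. policy_exit_moment \<pi> t s)"
proof (rule incseq_SucI)
  have "sink_ind s \<le> policy_op \<pi> sink_ind s" if "s \<in> states" for s
    using that policy_exit_moment_nonneg[of s \<pi> 1] policy_op_sink[of \<pi> sink_ind]
    by (cases "s = sink") (auto simp: policy_exit_moment_def sink_ind_def)
  then show "policy_exit_moment \<pi> t s \<le> policy_exit_moment \<pi> (Suc t) s" if "s \<in> states" for s t
    using that unfolding policy_exit_moment_def funpow_Suc_right comp_def
    by (intro policy_op_pow_mono_on[OF closed_under_states])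
qed

(* From every state of X, pi is absorbed within n steps with moment at least delta, so the
   moment still alive at time t is paid for by the growth of the exit moment from t to t + n. *)
lemma alive_moment_le:
  assumes X: "closed_under \<pi> X" and "0 < \<delta>" and exit: "\<And>s. s \<in> X \<Longrightarrow> \<delta> \<le> policy_exit_moment \<pi> n s"
    and "s \<in> X"
  shows "alive_moment \<pi> t s \<le> (policy_exit_moment \<pi> (t + n) s - policy_exit_moment \<pi> t s) / \<delta>"
proof -
  have bound: "1 - sink_ind s \<le> 1 / \<delta> * policy_exit_moment \<pi> n s + (- 1 / \<delta>) * sink_ind s"
    if "s \<in> X" for s
    using exit[OF that] \<open>0 < \<delta>\<close> policy_exit_moment_sink[of \<pi> n]
    by (cases "s = sink") (auto simp: sink_ind_def field_simps)
  have "alive_moment \<pi> t s \<le>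
      (policy_op \<pi> ^^ t) (\<lambda>s. 1 / \<delta> * policy_exit_moment \<pi> n s + (- 1 / \<delta>) * sink_ind s) s"
    unfolding alive_moment_def using X bound \<open>s \<in> X\<close> by (rule policy_op_pow_mono_on)
  also have "\<dots> = (policy_exit_moment \<pi> (t + n) s - policy_exit_moment \<pi> t s) / \<delta>"
    unfolding policy_op_pow_linear by (simp add: policy_exit_moment_def funpow_add diff_divide_distrib)
  finally show ?thesis .
qed

lemma policy_exit_moment_pi_star_le: "s \<in> bounded_states \<Longrightarrow> policy_exit_moment pi_star t s \<le> exit_limit s"
proof -
  assume s: "s \<in> bounded_states"
  have "policy_exit_moment pi_star t s \<le> (policy_op pi_star ^^ t) exit_limit s"
    unfolding policy_exit_moment_def using closed_under_pi_star _ s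
  proof (rule policy_op_pow_mono_on)
    show "sink_ind s \<le> exit_limit s" if "s \<in> bounded_states" for s
      using that exit_moment_le_limit[of s 0] by (simp add: exit_moment_0)
  qed
  also have "\<dots> \<le> exit_limit s"
    using closed_under_pi_star policy_op_pi_star_exit_limit_le s by (rule policy_op_pow_le_supersolution)
  finally show ?thesis .
qed

section \<open>Transience and the infinite horizon\<close>

definition alive_prob :: "(nat \<Rightarrow> 'a) \<Rightarrow> nat \<Rightarrow> nat \<Rightarrow> real" where
  "alive_prob \<pi> t s = (\<Sum>s''\<in>nonsink. occ S p (hr_of_sd \<pi>) s s'' t)"

lemma alive_prob_0: "s \<in> nonsink \<Longrightarrow> alive_prob \<pi> 0 s = 1"
  by (simp add: alive_prob_def occ_0)

lemma alive_prob_Suc: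
  "s \<in> states \<Longrightarrow> alive_prob \<pi> (Suc t) s = (\<Sum>s'\<in>states. p s (\<pi> s) s' * alive_prob \<pi> t s')"
proof -
  assume s: "s \<in> states"
  have "alive_prob \<pi> (Suc t) s = (\<Sum>s''\<in>nonsink. \<Sum>s'\<in>states. p s (\<pi> s) s' * occ S p (hr_of_sd \<pi>) s' s'' t)"
    unfolding alive_prob_def by (intro sum.cong refl occ_hr_of_sd_Suc s)
  also have "\<dots> = (\<Sum>s'\<in>states. p s (\<pi> s) s' * alive_prob \<pi> t s')"
    unfolding alive_prob_def sum_distrib_left by (rule sum.swap)
  finally show ?thesis .
qed

lemma alive_prob_closed_under:
  assumes "closed_under \<pi> X" "X \<subseteq> nonsink" "s \<in> X"
  shows "alive_prob \<pi> t s = 1"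
  using assms(3)
proof (induction t arbitrary: s)
  case 0
  then have "s \<in> nonsink"
    using assms(2) by auto
  then show ?case by (rule alive_prob_0)
next
  case (Suc t)
  have "s \<in> states"
    using Suc.prems assms(2) by auto
  have "p s (\<pi> s) s' * alive_prob \<pi> t s' = p s (\<pi> s) s'" if "s' \<in> states" for s'
  proof (cases "0 < p s (\<pi> s) s'")
    case True
    then have "s' \<in> X"
      using assms(1) Suc.prems that by (auto simp: closed_under_def)
    then show ?thesis by (simp add: Suc.IH)
  qed (use p_nonneg[OF \<open>s \<in> states\<close> that, of "\<pi> s"] in simp)
  then have "alive_prob \<pi> (Suc t) s = (\<Sum>s'\<in>states. p s (\<pi> s) s')"
    unfolding alive_prob_Suc[OF \<open>s \<in> states\<close>] by (rule sum.cong[OF refl])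
  then show ?case
    using sum_p[OF \<open>s \<in> states\<close>] by simp
qed

lemma weight_mult_le_policy_op_pow_Suc:
  assumes "s \<in> states" "s' \<in> states" "\<And>x. x \<in> states \<Longrightarrow> 0 \<le> f x"
  shows "weight s (\<pi> s) s' * (policy_op \<pi> ^^ k) f s' \<le> (policy_op \<pi> ^^ Suc k) f s"
  unfolding funpow.simps comp_def policy_op_def[of _ _ s]
  using assms by (intro member_le_sum mult_nonneg_nonneg weight_nonneg policy_op_pow_nonneg) auto

lemma closed_under_never_exit: "closed_under \<pi> {s\<in>nonsink. \<forall>k. policy_exit_moment \<pi> k s = 0}"
  unfolding closed_under_def
proof (intro conjI ballI impI)
  fix s s' assume s: "s \<in> {s\<in>nonsink. \<forall>k. policy_exit_moment \<pi> k s = 0}" and s': "s' \<in> states"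
    and "0 < p s (\<pi> s) s'"
  then have pos: "0 < weight s (\<pi> s) s'"
    by (simp add: weight_pos_iff)
  have "policy_exit_moment \<pi> k s' = 0" for k
  proof -
    have "weight s (\<pi> s) s' * policy_exit_moment \<pi> k s' \<le> policy_exit_moment \<pi> (Suc k) s"
      unfolding policy_exit_moment_def using s s'
      by (intro weight_mult_le_policy_op_pow_Suc) (auto simp: sink_ind_def)
    then show ?thesis
      using s pos policy_exit_moment_nonneg[OF s', of \<pi> k] by (simp add: mult_le_0_iff)
  qed
  moreover have "s' \<noteq> sink"
    using policy_exit_moment_sink[of \<pi> 0] calculation by (metis zero_neq_one)
  ultimately show "s' \<in> {s\<in>nonsink. \<forall>k. policy_exit_moment \<pi> k s = 0}"
    using s' by auto
qed auto

end

locale transient_erm_mdp = erm_mdp +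
  assumes transient: "transient S p"
begin

lemma alive_prob_tendsto_0: "s \<in> nonsink \<Longrightarrow> (\<lambda>t. alive_prob \<pi> t s) \<longlonglongrightarrow> 0"
  unfolding alive_prob_def
proof (rule tendsto_null_sum)
  fix s'' assume "s \<in> nonsink" "s'' \<in> nonsink"
  with transient show "(\<lambda>t. occ S p (hr_of_sd \<pi>) s s'' t) \<longlonglongrightarrow> 0"
    unfolding transient_def by (intro summable_LIMSEQ_zero) blast
qed

(* A state from which the sink is never reached would keep the chain in the nonsink states
   forever, contradicting transience. *)
lemma policy_exit_moment_pos: "s \<in> states \<Longrightarrow> \<exists>k. 0 < policy_exit_moment \<pi> k s"
proof (rule ccontr)
  assume s: "s \<in> states" and "\<nexists>k. 0 < policy_exit_moment \<pi> k s"
  then have "\<forall>k. policy_exit_moment \<pi> k s = 0"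
    using policy_exit_moment_nonneg[OF s] by (meson antisym not_le)
  moreover from this have "s \<noteq> sink"
    using policy_exit_moment_sink[of \<pi> 0] by auto
  ultimately have "alive_prob \<pi> t s = 1" for t
    using s by (intro alive_prob_closed_under[OF closed_under_never_exit]) auto
  with alive_prob_tendsto_0[of s \<pi>] \<open>s \<noteq> sink\<close> s show False
    using LIMSEQ_unique[OF tendsto_const] by fastforce
qed

lemma uniform_exit: "\<exists>n \<delta>. 0 < \<delta> \<and> (\<forall>s\<in>states. \<delta> \<le> policy_exit_moment \<pi> n s)"
proof -
  have "\<forall>s\<in>states. \<forall>\<^sub>F n in sequentially. 0 < policy_exit_moment \<pi> n s"
  proof
    fix s assume s: "s \<in> states"
    then obtain k where "0 < policy_exit_moment \<pi> k s"
      using policy_exit_moment_pos by blast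
    then show "\<forall>\<^sub>F n in sequentially. 0 < policy_exit_moment \<pi> n s"
      using incseq_policy_exit_moment[OF s, of \<pi>]
      unfolding eventually_sequentially incseq_def by (meson less_le_trans)
  qed
  then have "\<forall>\<^sub>F n in sequentially. \<forall>s\<in>states. 0 < policy_exit_moment \<pi> n s"
    by (intro eventually_ball_finite) auto
  then obtain n where pos: "\<forall>s\<in>states. 0 < policy_exit_moment \<pi> n s"
    unfolding eventually_sequentially by blast
  show ?thesis
  proof (intro exI conjI ballI)
    show "0 < Min (policy_exit_moment \<pi> n ` states)"
      using pos by (subst Min_gr_iff) auto
    show "Min (policy_exit_moment \<pi> n ` states) \<le> policy_exit_moment \<pi> n s" if "s \<in> states" for s
      using that by (intro Min_le) auto
  qed
qed

lemma alive_moment_pi_star_tendsto_0: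
  assumes s: "s \<in> bounded_states"
  shows "(\<lambda>t. alive_moment pi_star t s) \<longlonglongrightarrow> 0"
proof -
  obtain n \<delta> where "0 < \<delta>" and exit: "\<forall>s\<in>states. \<delta> \<le> policy_exit_moment pi_star n s"
    using uniform_exit by blast
  have "s \<in> states"
    using s bounded_states_subset by auto
  have "bdd_above (range (\<lambda>t. policy_exit_moment pi_star t s))"
    using s policy_exit_moment_pi_star_le by (intro bdd_aboveI2) blast
  then have L: "(\<lambda>t. policy_exit_moment pi_star t s) \<longlonglongrightarrow> (SUP t. policy_exit_moment pi_star t s)"
    using incseq_policy_exit_moment[OF \<open>s \<in> states\<close>] by (rule LIMSEQ_incseq_SUP)
  have L': "(\<lambda>t. policy_exit_moment pi_star (t + n) s) \<longlonglongrightarrow> (SUP t. policy_exit_moment pi_star t s)"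
    using L by (rule LIMSEQ_ignore_initial_segment)
  have "(\<lambda>t. policy_exit_moment pi_star (t + n) s - policy_exit_moment pi_star t s) \<longlonglongrightarrow>
      (SUP t. policy_exit_moment pi_star t s) - (SUP t. policy_exit_moment pi_star t s)"
    using L' L by (rule tendsto_diff)
  then have upper: "(\<lambda>t. (policy_exit_moment pi_star (t + n) s - policy_exit_moment pi_star t s) / \<delta>) \<longlonglongrightarrow> 0"
    unfolding diff_self by (rule tendsto_divide_zero)
  have le: "alive_moment pi_star t s \<le> (policy_exit_moment pi_star (t + n) s - policy_exit_moment pi_star t s) / \<delta>" for t
    using closed_under_pi_star \<open>0 < \<delta>\<close> _ s
  proof (rule alive_moment_le)
    show "\<delta> \<le> policy_exit_moment pi_star n s" if "s \<in> bounded_states" for s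
      using that exit bounded_states_subset by blast
  qed
  show ?thesis
    using alive_moment_nonneg[OF \<open>s \<in> states\<close>] le
    by (intro tendsto_sandwich[OF _ _ tendsto_const upper] always_eventually) auto
qed

lemma moment_pi_star_tendsto:
  assumes s: "s \<in> bounded_states"
  shows "(\<lambda>t. moment (hr_of_sd pi_star) t s) \<longlonglongrightarrow> exit_limit s"
proof -
  have "s \<in> states"
    using s bounded_states_subset by auto
  have lower: "exit_moment t s \<le> moment (hr_of_sd pi_star) t s" for t
    using exit_moment_le_opt_moment opt_moment_le_moment[OF valid_hr_of_sd] \<open>s \<in> states\<close> by (meson order.trans)
  have upper: "moment (hr_of_sd pi_star) t s \<le> exit_limit s + alive_moment pi_star t s" for t
    using moment_hr_of_sd_split[OF \<open>s \<in> states\<close>] policy_exit_moment_pi_star_le[OF s] by simp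
  have "(\<lambda>t. exit_limit s + alive_moment pi_star t s) \<longlonglongrightarrow> exit_limit s"
    using tendsto_add[OF tendsto_const alive_moment_pi_star_tendsto_0[OF s]] by simp
  with exit_moment_tendsto[OF s] show ?thesis
    by (rule tendsto_sandwich[rotated 2]) (simp_all add: lower upper always_eventually)
qed

lemma opt_moment_tendsto:
  assumes s: "s \<in> bounded_states"
  shows "(\<lambda>t. opt_moment t s) \<longlonglongrightarrow> exit_limit s"
proof -
  have "s \<in> states"
    using s bounded_states_subset by auto
  then have lower: "exit_moment t s \<le> opt_moment t s"
    and upper: "opt_moment t s \<le> moment (hr_of_sd pi_star) t s" for t
    by (simp_all add: exit_moment_le_opt_moment opt_moment_le_moment valid_hr_of_sd)
  from exit_moment_tendsto[OF s] moment_pi_star_tendsto[OF s] show ?thesis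
    by (rule tendsto_sandwich[rotated 2]) (simp_all add: lower upper always_eventually)
qed

lemma exit_limit_pos: "s \<in> bounded_states \<Longrightarrow> 0 < exit_limit s"
  using policy_exit_moment_pos[of s pi_star] policy_exit_moment_pi_star_le[of s] bounded_states_subset
  by (meson less_le_trans subsetD)

lemma opt_moment_tendsto_at_top:
  "s \<in> states \<Longrightarrow> s \<notin> bounded_states \<Longrightarrow> filterlim (\<lambda>t. opt_moment t s) at_top sequentially"
  by (rule filterlim_at_top_mono[OF exit_moment_tendsto_at_top always_eventually])
    (auto intro: exit_moment_le_opt_moment)

lemma moment_pi_star_tendsto_at_top:
  "s \<in> states \<Longrightarrow> s \<notin> bounded_states \<Longrightarrow> filterlim (\<lambda>t. moment (hr_of_sd pi_star) t s) at_top sequentially"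
  by (rule filterlim_at_top_mono[OF opt_moment_tendsto_at_top always_eventually])
    (auto intro: opt_moment_le_moment valid_hr_of_sd)

definition v_limit :: "nat \<Rightarrow> ereal" where
  "v_limit s = (if s \<in> bounded_states then ereal (cert_equiv \<beta> (exit_limit s)) else -\<infinity>)"

lemma v_star_tendsto: "s \<in> states \<Longrightarrow> (\<lambda>t. v_star S p r \<beta> t s) \<longlonglongrightarrow> v_limit s"
  unfolding v_star_eq_opt_moment v_limit_def
  using tendsto_cert_equiv[OF opt_moment_tendsto exit_limit_pos]
    tendsto_cert_equiv_at_top[OF beta_pos opt_moment_tendsto_at_top]
  by auto

lemma v_fin_pi_star_tendsto:
  "s \<in> states \<Longrightarrow> (\<lambda>t. ereal (v_fin S p r \<beta> (hr_of_sd pi_star) t s)) \<longlonglongrightarrow> v_limit s"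
  unfolding v_fin_eq_cert_equiv v_limit_def
  using tendsto_cert_equiv[OF moment_pi_star_tendsto exit_limit_pos]
    tendsto_cert_equiv_at_top[OF beta_pos moment_pi_star_tendsto_at_top]
  by auto

lemma v_inf_star_eq_v_limit: "s \<in> states \<Longrightarrow> v_inf_star S p r \<beta> s = v_limit s"
  unfolding v_inf_star_def by (intro lim_imp_Liminf v_star_tendsto) simp_all

lemma v_inf_pi_star_eq_v_limit: "s \<in> states \<Longrightarrow> v_inf S p r \<beta> (hr_of_sd pi_star) s = v_limit s"
  unfolding v_inf_def by (intro lim_imp_Liminf v_fin_pi_star_tendsto) simp_all

lemma erm_mu_v_limit:
  assumes "nonsink \<subseteq> bounded_states"
  shows "erm_mu S \<mu> \<beta> v_limit = ereal (cert_equiv \<beta> (\<Sum>s\<in>nonsink. \<mu> s * exit_limit s))"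
proof -
  have "exp (- \<beta> * cert_equiv \<beta> (exit_limit s)) = exit_limit s" if "s \<in> nonsink" for s
    using that assms beta_pos exit_limit_pos by (intro exp_cert_equiv) auto
  then have sum_eq: "(\<Sum>s\<in>nonsink. \<mu> s * exp (- \<beta> * cert_equiv \<beta> (exit_limit s))) =
      (\<Sum>s\<in>nonsink. \<mu> s * exit_limit s)"
    by simp
  have "erm_mu S \<mu> \<beta> v_limit = ereal (cert_equiv \<beta> (\<Sum>s\<in>nonsink. \<mu> s * exp (- \<beta> * cert_equiv \<beta> (exit_limit s))))"
  proof (rule erm_mu_ereal)
    show "v_limit s = ereal (cert_equiv \<beta> (exit_limit s))" if "s \<in> nonsink" for s
      using that assms by (auto simp: v_limit_def)
    show "0 < (\<Sum>s\<in>nonsink. \<mu> s * exp (- \<beta> * cert_equiv \<beta> (exit_limit s)))"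
      unfolding sum_eq using assms exit_limit_pos by (intro sum_mu_pos) auto
  qed
  then show ?thesis
    unfolding sum_eq .
qed

lemma g_star_tendsto: "g_star S p r \<mu> \<beta> \<longlonglongrightarrow> erm_mu S \<mu> \<beta> v_limit"
proof (cases "nonsink \<subseteq> bounded_states")
  case True
  have "(\<lambda>t. \<Sum>s\<in>nonsink. \<mu> s * opt_moment (Suc t) s) \<longlonglongrightarrow> (\<Sum>s\<in>nonsink. \<mu> s * exit_limit s)"
    using True by (intro tendsto_sum tendsto_mult_left LIMSEQ_Suc opt_moment_tendsto) auto
  moreover have "0 < (\<Sum>s\<in>nonsink. \<mu> s * exit_limit s)"
    using True exit_limit_pos by (intro sum_mu_pos) auto
  ultimately show ?thesis
    unfolding g_star_eq_opt_moment[abs_def] erm_mu_v_limit[OF True] by (rule tendsto_cert_equiv)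
next
  case False
  then obtain s\<^sub>0 where s\<^sub>0: "s\<^sub>0 \<in> nonsink" "s\<^sub>0 \<notin> bounded_states"
    by blast
  have lim: "filterlim (\<lambda>t. \<mu> s\<^sub>0 * opt_moment (Suc t) s\<^sub>0) at_top sequentially"
    using s\<^sub>0 opt_moment_tendsto_at_top[of s\<^sub>0] mu_pos[OF s\<^sub>0(1)]
      filterlim_sequentially_Suc[of "\<lambda>t. opt_moment t s\<^sub>0"]
    by (intro filterlim_tendsto_pos_mult_at_top[OF tendsto_const]) auto
  have le: "\<mu> s\<^sub>0 * opt_moment (Suc t) s\<^sub>0 \<le> (\<Sum>s\<in>nonsink. \<mu> s * opt_moment (Suc t) s)" for t
    using s\<^sub>0(1) mu_pos opt_moment_pos
    by (intro member_le_sum) (auto intro!: mult_nonneg_nonneg less_imp_le)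
  have "filterlim (\<lambda>t. \<Sum>s\<in>nonsink. \<mu> s * opt_moment (Suc t) s) at_top sequentially"
    by (rule filterlim_at_top_mono[OF lim always_eventually]) (intro allI le)
  moreover have "erm_mu S \<mu> \<beta> v_limit = -\<infinity>"
    using s\<^sub>0 mu_pos by (intro erm_mu_MInfty) (auto simp: v_limit_def)
  ultimately show ?thesis
    unfolding g_star_eq_opt_moment[abs_def] by (simp add: tendsto_cert_equiv_at_top beta_pos)
qed

lemma g_inf_star_eq_erm_mu: "g_inf_star S p r \<mu> \<beta> = erm_mu S \<mu> \<beta> (v_inf_star S p r \<beta>)"
proof -
  have "g_inf_star S p r \<mu> \<beta> = erm_mu S \<mu> \<beta> v_limit"
    unfolding g_inf_star_def by (intro lim_imp_Liminf g_star_tendsto) simp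
  also have "\<dots> = erm_mu S \<mu> \<beta> (v_inf_star S p r \<beta>)"
    by (intro erm_mu_cong) (simp add: v_inf_star_eq_v_limit)
  finally show ?thesis .
qed

end

theorem corollary2:
  fixes S :: nat and p r :: "nat \<Rightarrow> 'a::finite \<Rightarrow> nat \<Rightarrow> real" and \<mu> :: "nat \<Rightarrow> real" and \<beta> :: real
  assumes "0 < \<beta>" and "mdp S p r \<mu>" and "transient S p"
  shows "\<exists>\<pi>s::nat \<Rightarrow> 'a.
           (\<forall>s\<in>{1..S}. v_inf_star S p r \<beta> s = v_inf S p r \<beta> (hr_of_sd \<pi>s) s)
         \<and> g_inf_star S p r \<mu> \<beta> = erm_mu S \<mu> \<beta> (v_inf_star S p r \<beta>)
         \<and> erm_mu S \<mu> \<beta> (v_inf_star S p r \<beta>)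
             = (SUP \<pi>::nat \<Rightarrow> 'a. erm_mu S \<mu> \<beta> (v_inf S p r \<beta> (hr_of_sd \<pi>)))
         \<and> erm_mu S \<mu> \<beta> (v_inf S p r \<beta> (hr_of_sd \<pi>s))
             = (SUP \<pi>::nat \<Rightarrow> 'a. erm_mu S \<mu> \<beta> (v_inf S p r \<beta> (hr_of_sd \<pi>)))"
proof -
  interpret transient_erm_mdp S p r \<mu> \<beta>
    by unfold_locales (fact assms)+
  have v_eq: "\<forall>s\<in>{1..S}. v_inf_star S p r \<beta> s = v_inf S p r \<beta> (hr_of_sd pi_star) s"
    by (simp add: v_inf_star_eq_v_limit v_inf_pi_star_eq_v_limit)
  then have erm_pi_star: "erm_mu S \<mu> \<beta> (v_inf S p r \<beta> (hr_of_sd pi_star)) = erm_mu S \<mu> \<beta> (v_inf_star S p r \<beta>)"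
    by (intro erm_mu_cong) simp
  have "(SUP \<pi>. erm_mu S \<mu> \<beta> (v_inf S p r \<beta> (hr_of_sd \<pi>))) = erm_mu S \<mu> \<beta> (v_inf_star S p r \<beta>)"
  proof (rule antisym)
    show "(SUP \<pi>. erm_mu S \<mu> \<beta> (v_inf S p r \<beta> (hr_of_sd \<pi>))) \<le> erm_mu S \<mu> \<beta> (v_inf_star S p r \<beta>)"
      using beta_pos mu_pos by (intro SUP_least erm_mu_mono v_inf_hr_of_sd_le_v_inf_star)
    show "erm_mu S \<mu> \<beta> (v_inf_star S p r \<beta>) \<le> (SUP \<pi>. erm_mu S \<mu> \<beta> (v_inf S p r \<beta> (hr_of_sd \<pi>)))"
      using erm_pi_star by (intro SUP_upper2[of pi_star]) simp_all
  qed
  with v_eq erm_pi_star g_inf_star_eq_erm_mu show ?thesis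
    by metis
qed

end
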